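(* Let $G$ be a connected undirected graph without self-loops on $n$ vertices with degrees $d_i$ and Laplacian $L$, $C=\mathrm{diag}(c_1,\dots,c_n)$ with positive rationals $c_i$ of $O(\log n)$ bits and $c_id_i<1$, $P=I_n-CL$, $\pi=(\mathrm{tr}\,C^{-1})^{-1}C^{-1}\mathbf{1}$, and $\Gamma=\lim_{t\to\infty}\bigl(-\mathbf{1}\pi^Tt+\sum_{s=0}^{t-1}P^s\bigr)$. Then $(I_n-P\,|\,\mathbf{1})$ is invertible and $\Gamma=(I_n-\mathbf{1}\pi^T\,|\,\mathbf{0})\,(I_n-P\,|\,\mathbf{1})^{-1}$.
   Context: For an $n\times n$ matrix $Y$ and $y\in\mathbb{R}^n$, $(Y\,|\,y)$ denotes the matrix obtained from $Y$ by replacing its last column with $y$. $\mathbf{1}$ is the all-ones vector and $\mathbf{0}$ the zero vector. *)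

theory Defs
  imports "HOL-Analysis.Analysis"
begin

definition sym_loopfree :: "('n \<Rightarrow> 'n \<Rightarrow> bool) \<Rightarrow> bool" where
  "sym_loopfree E \<longleftrightarrow> (\<forall>i j. E i j \<longrightarrow> E j i) \<and> (\<forall>i. \<not> E i i)"

definition graph_connected :: "('n \<Rightarrow> 'n \<Rightarrow> bool) \<Rightarrow> bool" where
  "graph_connected E \<longleftrightarrow> (\<forall>i j. E\<^sup>*\<^sup>* i j)"

definition degree :: "('n::finite \<Rightarrow> 'n \<Rightarrow> bool) \<Rightarrow> 'n \<Rightarrow> nat" where
  "degree E i = card {j. E i j}"

definition laplacian :: "('n::finite \<Rightarrow> 'n \<Rightarrow> bool) \<Rightarrow> real^'n^'n" where
  "laplacian E = (\<chi> i j. (if i = j then real (degree E i) else 0) - (if E i j then 1 else 0))"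

definition diag_mat :: "('n::finite \<Rightarrow> real) \<Rightarrow> real^'n^'n" where
  "diag_mat c = (\<chi> i j. if i = j then c i else 0)"

primrec mat_pow :: "real^'n^'n \<Rightarrow> nat \<Rightarrow> real^'n^'n" where
  "mat_pow A 0 = mat 1"
| "mat_pow A (Suc k) = mat_pow A k ** A"

definition last_idx :: "'n::{finite,linorder}" where
  "last_idx = Max UNIV"

text \<open>(Y | y): replace the last column of Y by y.\<close>
definition repl_last_col :: "((real, 'n::{finite,linorder}) vec, 'n) vec \<Rightarrow> (real, 'n) vec \<Rightarrow> ((real, 'n) vec, 'n) vec" where
  "repl_last_col Y y = (\<chi> i j. if j = last_idx then y $ i else Y $ i $ j)"

definition outer :: "real^'n \<Rightarrow> real^'n \<Rightarrow> real^'n^'n" where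
  "outer u v = (\<chi> i j. u $ i * v $ j)"

end

theory Submission
  imports Defs
begin

text \<open>
  Give vertex \<open>i\<close> the weight \<open>1/c\<^sub>i\<close>. The weighted sum \<open>\<pi>\<^sup>T y\<close> is conserved by \<open>P\<close>, and the
  energy \<open>V(y) = \<Sum>\<^sub>i y\<^sub>i\<^sup>2 / c\<^sub>i\<close> is a Lyapunov function: one step \<open>y \<mapsto> P y\<close> lowers it by at
  least \<open>(1 - c\<^sub>i d\<^sub>i) (y\<^sub>i - y\<^sub>j)\<^sup>2\<close> for every edge \<open>ij\<close>. As \<open>c\<^sub>i d\<^sub>i < 1\<close> and \<open>G\<close> is connected,
  every orbit \<open>P\<^sup>t x\<close> reaches consensus at the value \<open>\<pi>\<^sup>T x\<close>, so \<open>P\<^sup>t \<longrightarrow> \<one>\<pi>\<^sup>T\<close>, and the fixed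
  points of \<open>P\<close> are the constant vectors, which makes \<open>(I - P | \<one>)\<close> injective. The partial sums
  \<open>S\<^sub>t = -t \<one>\<pi>\<^sup>T + \<Sum>\<^sub>s\<^sub><\<^sub>t P\<^sup>s\<close> telescope to \<open>S\<^sub>t (I - P) = I - P\<^sup>t\<close> and kill \<open>\<one>\<close>, i.e.
  \<open>S\<^sub>t (I - P | \<one>) = (I - P\<^sup>t | 0)\<close>; letting \<open>t \<rightarrow> \<infinity>\<close> gives the formula for \<open>\<Gamma>\<close>.
\<close>

lemma matrix_add_rdistrib: "((A::'a::semiring_1^'n^'m) + B) ** C = A ** C + B ** C"
  by (simp add: matrix_matrix_mult_def vec_eq_iff sum.distrib distrib_right)

lemma matrix_diff_rdistrib: "((A::'a::ring_1^'n^'m) - B) ** C = A ** C - B ** C"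
  by (simp add: matrix_matrix_mult_def vec_eq_iff sum_subtractf left_diff_distrib)

lemma matrix_diff_ldistrib: "(A::'a::ring_1^'n^'m) ** (B - C) = A ** B - A ** C"
  by (simp add: matrix_matrix_mult_def vec_eq_iff sum_subtractf right_diff_distrib)

lemma matrix_sum_mult: "(\<Sum>s\<in>S. f s :: 'a::semiring_1^'n^'m) ** C = (\<Sum>s\<in>S. f s ** C)"
  by (induction S rule: infinite_finite_induct) (simp_all add: matrix_add_rdistrib)

lemma matrix_scaleR_vector_mult: "((k::real) *\<^sub>R (A::real^'n^'m)) *v x = k *\<^sub>R (A *v x)"
  by (simp add: matrix_vector_mult_def vec_eq_iff sum_distrib_left mult_ac)

lemma matrix_sum_vector_mult: "(\<Sum>s\<in>S. f s :: 'a::semiring_1^'n^'m) *v x = (\<Sum>s\<in>S. f s *v x)"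
  by (induction S rule: infinite_finite_induct) (simp_all add: matrix_vector_mult_add_rdistrib)

lemma matrix_inv_right:
  fixes A :: "'a::field^'n^'n"
  assumes "invertible A"
  shows "A ** matrix_inv A = mat 1"
  using assms unfolding invertible_def matrix_inv_def by (rule someI2_ex) simp

lemma tendsto_matrix_mult_right:
  fixes A :: "'a \<Rightarrow> real^'n^'m"
  assumes "(A \<longlongrightarrow> B) F"
  shows "((\<lambda>t. A t ** C) \<longlongrightarrow> B ** C) F"
  unfolding matrix_matrix_mult_def
  by (intro vec_tendstoI)
    (simp add: tendsto_sum tendsto_mult_right tendsto_vec_nth assms)

lemma vector_matrix_eq_iff_inner:
  "(x::real^'m) v* A = x \<longleftrightarrow> (\<forall>y. x \<bullet> (A *v y) = x \<bullet> y)"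
proof
  assume "\<forall>y. x \<bullet> (A *v y) = x \<bullet> y"
  then have "(x v* A - x) \<bullet> y = 0" for y
    by (simp add: inner_diff_left dot_lmul_matrix)
  then show "x v* A = x"
    by (metis inner_eq_zero_iff right_minus_eq)
qed (simp add: dot_lmul_matrix[symmetric])

lemma outer_mult_vec: "outer u v *v x = (v \<bullet> x) *\<^sub>R u"
  by (simp add: outer_def matrix_vector_mult_def inner_vec_def vec_eq_iff sum_distrib_left mult_ac)

lemma outer_mult_matrix: "outer u v ** A = outer u (v v* A)"
  by (simp add: outer_def matrix_matrix_mult_def vector_matrix_mult_def vec_eq_iff sum_distrib_left mult_ac)

lemma mat_pow_commute: "mat_pow A k ** A = A ** mat_pow A k"
proof (induction k)
  case (Suc k)
  then have "mat_pow A (Suc k) ** A = (A ** mat_pow A k) ** A" by simp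
  also have "\<dots> = A ** mat_pow A (Suc k)" by (simp add: matrix_mul_assoc)
  finally show ?case .
qed simp

lemma mat_pow_Suc_vector: "mat_pow A (Suc k) *v x = A *v (mat_pow A k *v x)"
  by (simp add: mat_pow_commute matrix_vector_mul_assoc)

lemma mat_pow_fixed_vector: "A *v x = x \<Longrightarrow> mat_pow A k *v x = x"
  by (induction k) (simp_all only: mat_pow_Suc_vector mat_pow.simps(1) matrix_vector_mul_lid)

lemma mat_pow_nth: "mat_pow A t $ i $ j = (mat_pow A t *v axis j 1) $ i"
  by (simp add: matrix_vector_mult_def axis_def if_distrib cong: if_cong)

lemma matrix_mult_repl_last_col:
  "A ** repl_last_col Y y = repl_last_col (A ** Y) (A *v y)"
  by (simp add: repl_last_col_def matrix_matrix_mult_def matrix_vector_mult_def vec_eq_iff)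

lemma repl_last_col_mult_vec:
  "repl_last_col Y y *v x = Y *v (\<chi> j. if j = last_idx then 0 else x $ j) + x $ last_idx *\<^sub>R y"
proof -
  have "(if j = last_idx then y $ i else Y $ i $ j) * x $ j
      = Y $ i $ j * (if j = last_idx then 0 else x $ j) + (if j = last_idx then x $ last_idx * y $ i else 0)"
    for i j
    by auto
  then show ?thesis
    by (simp add: repl_last_col_def matrix_vector_mult_def vec_eq_iff sum.distrib)
qed

lemma tendsto_repl_last_col:
  assumes "(Y \<longlongrightarrow> Y') F"
  shows "((\<lambda>t. repl_last_col (Y t) y) \<longlongrightarrow> repl_last_col Y' y) F"
proof -
  have "((\<lambda>t. Y t $ i $ j) \<longlongrightarrow> Y' $ i $ j) F" for i j
    by (intro tendsto_vec_nth assms)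
  then show ?thesis
    unfolding repl_last_col_def by (intro vec_tendstoI) simp
qed

subsection \<open>Matrices with a stationary vector and a consensus limit\<close>

lemma tendsto_consensus_value:
  fixes y :: "nat \<Rightarrow> real^'n"
  assumes consensus: "\<And>i j. (\<lambda>t. y t $ i - y t $ j) \<longlonglongrightarrow> 0"
    and conserved: "\<And>t. \<pi> \<bullet> y t = m" and normalized: "\<pi> \<bullet> 1 = 1"
  shows "(\<lambda>t. y t $ i) \<longlonglongrightarrow> m"
proof -
  have "y t $ i - m = (\<Sum>j\<in>UNIV. \<pi> $ j * (y t $ i - y t $ j))" for t
    using conserved[of t] normalized
    by (simp add: inner_vec_def right_diff_distrib sum_subtractf sum_distrib_right[symmetric] mult.commute)
  moreover have "(\<lambda>t. \<Sum>j\<in>UNIV. \<pi> $ j * (y t $ i - y t $ j)) \<longlonglongrightarrow> (\<Sum>j\<in>UNIV. \<pi> $ j * 0)"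
    by (intro tendsto_sum tendsto_mult tendsto_const consensus)
  ultimately have "(\<lambda>t. y t $ i - m) \<longlonglongrightarrow> 0"
    by simp
  then show ?thesis
    by (simp add: LIM_zero_iff)
qed

lemma inner_mat_pow_stationary:
  assumes "\<pi> v* P = \<pi>"
  shows "\<pi> \<bullet> (mat_pow P t *v x) = \<pi> \<bullet> x"
proof (induction t)
  case (Suc t)
  then show ?case
    using assms by (simp only: mat_pow_Suc_vector dot_lmul_matrix[symmetric])
qed simp

lemma mat_pow_tendsto_outer:
  fixes P :: "real^'n^'n"
  assumes consensus: "\<And>x i j. (\<lambda>t. (mat_pow P t *v x) $ i - (mat_pow P t *v x) $ j) \<longlonglongrightarrow> 0"
    and stationary: "\<pi> v* P = \<pi>" and normalized: "\<pi> \<bullet> 1 = 1"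
  shows "mat_pow P \<longlonglongrightarrow> outer 1 \<pi>"
proof (intro vec_tendstoI)
  fix i j
  have "(\<lambda>t. (mat_pow P t *v axis j 1) $ i) \<longlonglongrightarrow> \<pi> \<bullet> axis j 1"
    by (rule tendsto_consensus_value[OF consensus inner_mat_pow_stationary[OF stationary] normalized])
  then show "(\<lambda>t. mat_pow P t $ i $ j) \<longlonglongrightarrow> outer 1 \<pi> $ i $ j"
    by (simp add: mat_pow_nth outer_def inner_axis)
qed

lemma invertible_repl_last_col_one:
  fixes P :: "real^('n::{finite,linorder})^('n::{finite,linorder})"
  assumes stationary: "\<pi> v* P = \<pi>" and "\<pi> \<bullet> 1 \<noteq> 0"
    and fixed_points_constant: "\<And>y i j. P *v y = y \<Longrightarrow> y $ i = y $ j"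
  shows "invertible (repl_last_col (mat 1 - P) 1)"
  unfolding invertible_left_inverse matrix_left_invertible_ker
proof (intro allI impI)
  fix x
  assume "repl_last_col (mat 1 - P) 1 *v x = 0"
  moreover define z where "z = (\<chi> j. if j = last_idx then 0 else x $ j)"
  ultimately have kernel: "z - P *v z + x $ last_idx *\<^sub>R 1 = 0"
    by (simp add: repl_last_col_mult_vec matrix_vector_mult_diff_rdistrib)
  have "\<pi> \<bullet> (z - P *v z) = 0"
    using stationary by (simp add: inner_diff_right dot_lmul_matrix[symmetric])
  then have "x $ last_idx * (\<pi> \<bullet> 1) = 0"
    using arg_cong[OF kernel, of "inner \<pi>"] by (simp add: inner_add_right)
  then have x_last: "x $ last_idx = 0"
    using assms(2) by simp
  then have "P *v z = z"
    using kernel by simp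
  then have "z $ i = z $ last_idx" for i
    by (rule fixed_points_constant)
  then show "x = 0"
    using x_last by (simp add: z_def vec_eq_iff) metis
qed

definition deviation_sum :: "real^'n^'n \<Rightarrow> real^'n^'n \<Rightarrow> nat \<Rightarrow> real^'n^'n" where
  "deviation_sum P Q t = - (of_nat t *\<^sub>R Q) + (\<Sum>s<t. mat_pow P s)"

lemma deviation_sum_mult_I_minus:
  assumes "Q ** P = Q"
  shows "deviation_sum P Q t ** (mat 1 - P) = mat 1 - mat_pow P t"
proof -
  have "Q ** (mat 1 - P) = 0"
    using assms by (simp add: matrix_diff_ldistrib)
  then have "deviation_sum P Q t ** (mat 1 - P) = (\<Sum>s<t. mat_pow P s ** (mat 1 - P))"
    by (simp add: deviation_sum_def matrix_diff_rdistrib matrix_sum_mult flip: scalar_matrix_assoc)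
  also have "\<dots> = (\<Sum>s<t. mat_pow P s - mat_pow P (Suc s))"
    by (simp only: matrix_diff_ldistrib matrix_mul_rid mat_pow.simps)
  also have "\<dots> = mat 1 - mat_pow P t"
    using sum_lessThan_telescope'[of "mat_pow P" t] by simp
  finally show ?thesis .
qed

lemma deviation_sum_mult_fixed_vector:
  assumes "P *v u = u" and "Q *v u = u"
  shows "deviation_sum P Q t *v u = 0"
  using assms
  by (simp add: deviation_sum_def matrix_vector_mult_diff_rdistrib matrix_scaleR_vector_mult
      matrix_sum_vector_mult mat_pow_fixed_vector sum_constant_scaleR del: sum_constant)

lemma deviation_sum_tendsto:
  fixes P :: "real^('n::{finite,linorder})^('n::{finite,linorder})"
  assumes "P *v 1 = 1" and "Q *v 1 = 1" and "Q ** P = Q"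
    and "mat_pow P \<longlonglongrightarrow> Q" and invertible: "invertible (repl_last_col (mat 1 - P) 1)"
  shows "deviation_sum P Q \<longlonglongrightarrow>
    repl_last_col (mat 1 - Q) 0 ** matrix_inv (repl_last_col (mat 1 - P) 1)"
proof -
  define M where "M = repl_last_col (mat 1 - P) 1"
  have "deviation_sum P Q t ** M = repl_last_col (mat 1 - mat_pow P t) 0" for t
    using assms
    by (simp add: M_def matrix_mult_repl_last_col deviation_sum_mult_I_minus
        deviation_sum_mult_fixed_vector)
  then have "deviation_sum P Q = (\<lambda>t. repl_last_col (mat 1 - mat_pow P t) 0 ** matrix_inv M)"
    using matrix_inv_right[OF invertible]
    by (metis M_def matrix_mul_assoc matrix_mul_rid)
  moreover have "(\<lambda>t. repl_last_col (mat 1 - mat_pow P t) 0 ** matrix_inv M)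
      \<longlonglongrightarrow> repl_last_col (mat 1 - Q) 0 ** matrix_inv M"
    by (intro tendsto_matrix_mult_right tendsto_repl_last_col tendsto_diff tendsto_const assms)
  ultimately show ?thesis
    by (simp add: M_def)
qed

subsection \<open>Graph Laplacians\<close>

definition local_variation :: "('n \<Rightarrow> 'n \<Rightarrow> bool) \<Rightarrow> real^'n \<Rightarrow> 'n \<Rightarrow> real" where
  "local_variation E y i = (\<Sum>j\<in>{j. E i j}. (y $ i - y $ j)\<^sup>2)"

lemma local_variation_nonneg: "0 \<le> local_variation E y i"
  unfolding local_variation_def by (rule sum_nonneg) simp

lemma laplacian_mult_vec: "(laplacian E *v y) $ i = (\<Sum>j\<in>{j. E i j}. y $ i - y $ j)"
proof -
  have "laplacian E $ i $ j * y $ j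
      = (if i = j then real (degree E i) * y $ j else 0) - (if E i j then y $ j else 0)" for j
    by (simp add: laplacian_def left_diff_distrib)
  then have "(laplacian E *v y) $ i = real (degree E i) * y $ i - (\<Sum>j\<in>{j. E i j}. y $ j)"
    by (simp add: matrix_vector_mult_def sum_subtractf sum.If_cases)
  then show ?thesis
    by (simp add: sum_subtractf degree_def)
qed

lemma sum_neighbours_swap:
  fixes E :: "'n::finite \<Rightarrow> 'n \<Rightarrow> bool"
  assumes "symp E"
  shows "(\<Sum>i\<in>UNIV. \<Sum>j\<in>{j. E i j}. f i j) = (\<Sum>i\<in>UNIV. \<Sum>j\<in>{j. E i j}. f j i)"
proof -
  have "(\<Sum>i\<in>UNIV. \<Sum>j\<in>{j. E i j}. f i j) = (\<Sum>i\<in>UNIV. \<Sum>j\<in>UNIV. if E i j then f i j else 0)"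
    by (simp add: sum.If_cases)
  also have "\<dots> = (\<Sum>j\<in>UNIV. \<Sum>i\<in>UNIV. if E j i then f i j else 0)"
    using assms by (subst sum.swap) (auto intro!: sum.cong dest: sympD)
  also have "\<dots> = (\<Sum>i\<in>UNIV. \<Sum>j\<in>{j. E i j}. f j i)"
    by (simp add: sum.If_cases)
  finally show ?thesis .
qed

lemma sum_laplacian_mult_vec:
  fixes E :: "'n::finite \<Rightarrow> 'n \<Rightarrow> bool"
  assumes "symp E"
  shows "(\<Sum>i\<in>UNIV. (laplacian E *v y) $ i) = 0"
proof -
  have "(\<Sum>i\<in>UNIV. (laplacian E *v y) $ i) = (\<Sum>i\<in>UNIV. \<Sum>j\<in>{j. E i j}. y $ j - y $ i)"
    unfolding laplacian_mult_vec by (rule sum_neighbours_swap[OF assms])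
  also have "\<dots> = - (\<Sum>i\<in>UNIV. (laplacian E *v y) $ i)"
    by (simp add: laplacian_mult_vec flip: sum_negf)
  finally show ?thesis
    by simp
qed

lemma laplacian_quadratic_form:
  fixes E :: "'n::finite \<Rightarrow> 'n \<Rightarrow> bool"
  assumes "symp E"
  shows "2 * (\<Sum>i\<in>UNIV. y $ i * (laplacian E *v y) $ i) = (\<Sum>i\<in>UNIV. local_variation E y i)"
proof -
  have forward: "(\<Sum>i\<in>UNIV. y $ i * (laplacian E *v y) $ i)
      = (\<Sum>i\<in>UNIV. \<Sum>j\<in>{j. E i j}. y $ i * (y $ i - y $ j))"
    by (simp add: laplacian_mult_vec sum_distrib_left)
  also have "\<dots> = (\<Sum>i\<in>UNIV. \<Sum>j\<in>{j. E i j}. y $ j * (y $ j - y $ i))"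
    by (rule sum_neighbours_swap[OF assms])
  finally have backward: "(\<Sum>i\<in>UNIV. y $ i * (laplacian E *v y) $ i)
      = (\<Sum>i\<in>UNIV. \<Sum>j\<in>{j. E i j}. y $ j * (y $ j - y $ i))" .
  have "(y $ i - y $ j)\<^sup>2 = y $ i * (y $ i - y $ j) + y $ j * (y $ j - y $ i)" for i j
    by (simp add: power2_eq_square algebra_simps)
  then show ?thesis
    using forward backward by (simp add: local_variation_def sum.distrib)
qed

lemma laplacian_mult_vec_square_le:
  "((laplacian E *v y) $ i)\<^sup>2 \<le> real (degree E i) * local_variation E y i"
  using sum_squared_le_sum_of_squares[of "\<lambda>j. y $ i - y $ j" "{j. E i j}"]
  by (simp add: laplacian_mult_vec local_variation_def degree_def mult.commute)

lemma eq_along_rtranclp: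
  assumes "E\<^sup>*\<^sup>* i j" and "\<And>a b. E a b \<Longrightarrow> f a = f b"
  shows "f i = f j"
  using assms(1) by induction (simp_all add: assms(2))

lemma tendsto_diff_along_rtranclp:
  fixes x :: "'a \<Rightarrow> 'n \<Rightarrow> real"
  assumes "E\<^sup>*\<^sup>* i j" and edge: "\<And>a b. E a b \<Longrightarrow> ((\<lambda>t. x t a - x t b) \<longlongrightarrow> 0) F"
  shows "((\<lambda>t. x t i - x t j) \<longlongrightarrow> 0) F"
  using assms(1)
proof induction
  case (step a b)
  have "((\<lambda>t. (x t i - x t a) + (x t a - x t b)) \<longlongrightarrow> 0 + 0) F"
    by (intro tendsto_add step.IH edge step.hyps)
  then show ?case
    by simp
qed simp

lemma tendsto_successive_diff_decseq:
  fixes a :: "nat \<Rightarrow> real"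
  assumes "decseq a" and "\<And>t. 0 \<le> a t"
  shows "(\<lambda>t. a t - a (Suc t)) \<longlonglongrightarrow> 0"
proof -
  obtain L where "a \<longlonglongrightarrow> L"
    using assms decseq_convergent by blast
  then have "(\<lambda>t. a t - a (Suc t)) \<longlonglongrightarrow> L - L"
    by (intro tendsto_diff LIMSEQ_Suc)
  then show ?thesis
    by simp
qed

subsection \<open>The lazy walk \<open>I - C L\<close>\<close>

locale graph_walk =
  fixes E :: "'n::finite \<Rightarrow> 'n \<Rightarrow> bool" and c :: "'n \<Rightarrow> real"
  assumes symmetric: "symp E" and connected: "\<And>i j. E\<^sup>*\<^sup>* i j"
    and c_pos: "\<And>i. 0 < c i" and c_degree_less_1: "\<And>i. c i * real (degree E i) < 1"
begin

definition walk :: "real^'n^'n" where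
  "walk = mat 1 - diag_mat c ** laplacian E"

definition stationary :: "real^'n" where
  "stationary = (\<chi> i. inverse (\<Sum>j\<in>UNIV. inverse (c j)) * inverse (c i))"

definition energy :: "real^'n \<Rightarrow> real" where
  "energy y = (\<Sum>i\<in>UNIV. (y $ i)\<^sup>2 / c i)"

lemma walk_mult_vec: "(walk *v y) $ i = y $ i - c i * (laplacian E *v y) $ i"
proof -
  have "diag_mat c $ i $ j * z $ j = (if i = j then c i * z $ j else 0)" for j z
    by (simp add: diag_mat_def)
  then have "(diag_mat c *v z) $ i = c i * z $ i" for z
    by (simp add: matrix_vector_mult_def)
  then show ?thesis
    by (simp add: walk_def matrix_vector_mult_diff_rdistrib flip: matrix_vector_mul_assoc)
qed

lemma walk_mult_one: "walk *v 1 = 1"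
  by (simp add: vec_eq_iff walk_mult_vec laplacian_mult_vec)

lemma inner_stationary_walk: "stationary \<bullet> (walk *v y) = stationary \<bullet> y"
proof -
  have "stationary $ i * c i = inverse (\<Sum>j\<in>UNIV. inverse (c j))" for i
    using c_pos[of i] by (simp add: stationary_def)
  then have "stationary \<bullet> (walk *v y)
      = stationary \<bullet> y - inverse (\<Sum>j\<in>UNIV. inverse (c j)) * (\<Sum>i\<in>UNIV. (laplacian E *v y) $ i)"
    by (simp add: inner_vec_def walk_mult_vec right_diff_distrib sum_subtractf sum_distrib_left
        mult.assoc[symmetric])
  then show ?thesis
    by (simp add: sum_laplacian_mult_vec[OF symmetric])
qed

lemma stationary_walk: "stationary v* walk = stationary"
  by (simp add: vector_matrix_eq_iff_inner inner_stationary_walk)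

lemma inner_stationary_one: "stationary \<bullet> 1 = 1"
proof -
  have "0 < (\<Sum>j\<in>UNIV. inverse (c j))"
    using c_pos by (intro sum_pos) auto
  then show ?thesis
    by (simp add: stationary_def inner_vec_def flip: sum_distrib_left)
qed

lemma energy_nonneg: "0 \<le> energy y"
  unfolding energy_def using c_pos by (intro sum_nonneg) (simp add: less_imp_le)

text \<open>Expanding \<open>(y\<^sub>i - c\<^sub>i (L y)\<^sub>i)\<^sup>2 / c\<^sub>i\<close>, the cross terms sum to the Dirichlet form and the
  quadratic terms are bounded by Cauchy-Schwarz.\<close>

lemma energy_walk_le:
  "energy (walk *v y) + (\<Sum>i\<in>UNIV. (1 - c i * real (degree E i)) * local_variation E y i)
    \<le> energy y"
proof -
  let ?g = "\<lambda>i. (laplacian E *v y) $ i"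
  have "((walk *v y) $ i)\<^sup>2 / c i = (y $ i)\<^sup>2 / c i - 2 * (y $ i * ?g i) + c i * (?g i)\<^sup>2" for i
    using c_pos[of i] by (simp add: walk_mult_vec power2_eq_square field_simps)
  then have "energy (walk *v y)
      = energy y - 2 * (\<Sum>i\<in>UNIV. y $ i * ?g i) + (\<Sum>i\<in>UNIV. c i * (?g i)\<^sup>2)"
    by (simp add: energy_def sum.distrib sum_subtractf sum_distrib_left)
  also have "\<dots> = energy y - (\<Sum>i\<in>UNIV. local_variation E y i) + (\<Sum>i\<in>UNIV. c i * (?g i)\<^sup>2)"
    by (simp add: laplacian_quadratic_form[OF symmetric])
  also have "\<dots> \<le> energy y - (\<Sum>i\<in>UNIV. local_variation E y i)
      + (\<Sum>i\<in>UNIV. c i * real (degree E i) * local_variation E y i)"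
    using laplacian_mult_vec_square_le c_pos
    by (intro add_left_mono sum_mono) (simp add: mult.assoc less_imp_le mult_left_mono)
  finally show ?thesis
    by (simp add: sum_subtractf left_diff_distrib)
qed

lemma energy_walk_mono: "energy (walk *v y) \<le> energy y"
proof -
  have "0 \<le> (\<Sum>i\<in>UNIV. (1 - c i * real (degree E i)) * local_variation E y i)"
    using c_degree_less_1 local_variation_nonneg
    by (intro sum_nonneg) (auto intro!: mult_nonneg_nonneg simp: less_imp_le)
  then show ?thesis
    using energy_walk_le[of y] by simp
qed

lemma energy_decrease_edge:
  assumes "E i j"
  shows "(1 - c i * real (degree E i)) * (y $ i - y $ j)\<^sup>2 \<le> energy y - energy (walk *v y)"
proof -
  have "(y $ i - y $ j)\<^sup>2 \<le> local_variation E y i"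
    unfolding local_variation_def using assms by (intro member_le_sum) auto
  then have "(1 - c i * real (degree E i)) * (y $ i - y $ j)\<^sup>2
      \<le> (1 - c i * real (degree E i)) * local_variation E y i"
    using c_degree_less_1[of i] by (intro mult_left_mono) auto
  also have "\<dots> \<le> (\<Sum>i\<in>UNIV. (1 - c i * real (degree E i)) * local_variation E y i)"
    using c_degree_less_1 local_variation_nonneg
    by (intro member_le_sum) (auto intro!: mult_nonneg_nonneg simp: less_imp_le)
  finally show ?thesis
    using energy_walk_le[of y] by simp
qed

lemma walk_fixed_point_constant:
  assumes "walk *v y = y"
  shows "y $ i = y $ j"
proof (rule eq_along_rtranclp[OF connected])
  fix a b
  assume "E a b"
  then have "(1 - c a * real (degree E a)) * (y $ a - y $ b)\<^sup>2 \<le> 0"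
    using energy_decrease_edge[of a b y] assms by simp
  moreover have "0 < 1 - c a * real (degree E a)"
    using c_degree_less_1[of a] by simp
  ultimately show "y $ a = y $ b"
    by (simp add: mult_le_0_iff)
qed

lemma walk_consensus: "(\<lambda>t. (mat_pow walk t *v x) $ i - (mat_pow walk t *v x) $ j) \<longlonglongrightarrow> 0"
proof (rule tendsto_diff_along_rtranclp[OF connected])
  fix a b
  assume edge: "E a b"
  define y where "y t = mat_pow walk t *v x" for t
  define \<kappa> where "\<kappa> = 1 - c a * real (degree E a)"
  have "0 < \<kappa>"
    using c_degree_less_1[of a] by (simp add: \<kappa>_def)
  have y_Suc: "y (Suc t) = walk *v y t" for t
    by (simp only: y_def mat_pow_Suc_vector)
  have "decseq (\<lambda>t. energy (y t))"
    by (rule decseq_SucI) (simp add: y_Suc energy_walk_mono)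
  then have "(\<lambda>t. energy (y t) - energy (y (Suc t))) \<longlonglongrightarrow> 0"
    by (rule tendsto_successive_diff_decseq) (rule energy_nonneg)
  then have upper: "(\<lambda>t. (energy (y t) - energy (y (Suc t))) / \<kappa>) \<longlonglongrightarrow> 0"
    by (rule tendsto_divide_zero)
  have "(y t $ a - y t $ b)\<^sup>2 \<le> (energy (y t) - energy (y (Suc t))) / \<kappa>" for t
    using energy_decrease_edge[OF edge, of "y t"] \<open>0 < \<kappa>\<close>
    by (simp add: y_Suc \<kappa>_def pos_le_divide_eq mult.commute)
  then have "(\<lambda>t. (y t $ a - y t $ b)\<^sup>2) \<longlonglongrightarrow> 0"
    by (intro tendsto_sandwich[OF _ _ tendsto_const upper] always_eventually allI) simp_all
  then show "(\<lambda>t. (mat_pow walk t *v x) $ a - (mat_pow walk t *v x) $ b) \<longlonglongrightarrow> 0"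
    by (simp add: y_def)
qed

end

theorem lemma3p10:
  fixes E :: "'n::{finite,linorder} \<Rightarrow> 'n \<Rightarrow> bool"
    and c :: "'n \<Rightarrow> real"
  assumes "sym_loopfree E"
    and "graph_connected E"
    and "\<forall>i. c i \<in> \<rat> \<and> c i > 0"
    and "\<forall>i. c i * real (degree E i) < 1"
  defines "P \<equiv> mat 1 - diag_mat c ** laplacian E"
    and "\<pi> \<equiv> (\<chi> i. inverse (\<Sum>j\<in>UNIV. inverse (c j)) * inverse (c i)) :: (real, 'n) vec"
  shows "invertible (repl_last_col (mat 1 - P) (vec 1))
    \<and> ((\<lambda>t. - (of_nat t *\<^sub>R outer (vec 1) \<pi>) + (\<Sum>s<t. mat_pow P s))
        \<longlonglongrightarrow> repl_last_col (mat 1 - outer (vec 1) \<pi>) 0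
              ** matrix_inv (repl_last_col (mat 1 - P) (vec 1)))"
proof -
  interpret graph_walk E c
    using assms(1-4) unfolding sym_loopfree_def graph_connected_def
    by unfold_locales (auto simp: symp_def)
  have P: "P = walk" and \<pi>: "\<pi> = stationary"
    unfolding P_def \<pi>_def walk_def stationary_def by simp_all
  have invertible: "invertible (repl_last_col (mat 1 - walk) 1)"
    by (rule invertible_repl_last_col_one[OF stationary_walk _ walk_fixed_point_constant])
      (simp add: inner_stationary_one)
  have "deviation_sum walk (outer 1 stationary)
      \<longlonglongrightarrow> repl_last_col (mat 1 - outer 1 stationary) 0 ** matrix_inv (repl_last_col (mat 1 - walk) 1)"
  proof (rule deviation_sum_tendsto[OF walk_mult_one _ _ _ invertible])
    show "outer 1 stationary *v 1 = 1"
      by (simp add: outer_mult_vec inner_stationary_one)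
    show "outer 1 stationary ** walk = outer 1 stationary"
      by (simp add: outer_mult_matrix stationary_walk)
    show "mat_pow walk \<longlonglongrightarrow> outer 1 stationary"
      by (rule mat_pow_tendsto_outer[OF walk_consensus stationary_walk inner_stationary_one])
  qed
  then show ?thesis
    using invertible by (simp add: P \<pi> deviation_sum_def[abs_def])
qed

end
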